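(* Let $\mathcal{X}=\mathcal{Y}=\mathcal{A}=\mathcal{B}=\{0,1\}$ and $\kappa\in[0,1)$. Then $$\max_{p\in\mathcal{P}_2^{AB,(0,\kappa)}}\ \big(\langle A_0B_0\rangle+\langle A_0B_1\rangle+\langle A_1B_0\rangle-\langle A_1B_1\rangle\big)=2+2\kappa,$$ where $\langle A_xB_y\rangle=\sum_{a,b\in\{0,1\}}(-1)^{a+b}p(ab|xy)$.
   Context: $\mathcal{P}_2^{AB,(\epsilon_A,\epsilon_B)}$ is the set of all conditional distributions $p(ab|xy)$ for which there exist a probability space $(\Lambda,q)$ and distributions $p_A(\cdot|x,y,\lambda)$, $p_B(\cdot|x,y,\lambda)$ on $\{0,1\}$ with $p(ab|xy)=\int q(d\lambda)p_A(a|xy\lambda)p_B(b|xy\lambda)$, $\frac12\sum_a|p_A(a|xy\lambda)-p_A(a|xy'\lambda)|\le\epsilon_A$ for all $x,y,y',\lambda$, and $\frac12\sum_b|p_B(b|xy\lambda)-p_B(b|x'y\lambda)|\le\epsilon_B$ for all $y,x,x',\lambda$. With $\epsilon_A=0,\epsilon_B=\kappa$ this models leakage of Alice's input to Bob's outcome only. *)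

theory Defs
  imports "HOL-Probability.Probability"
begin

text \<open>Inputs x,y and outcomes a,b range over {0,1} (as naturals).
  A conditional distribution is p a b x y = p(ab|xy).
  The hidden variable lives in a probability space M on an arbitrary type 'l.\<close>

definition bits :: "nat set" where "bits = {0, 1}"

definition is_local_distr :: "(nat \<Rightarrow> nat \<Rightarrow> 'l \<Rightarrow> nat \<Rightarrow> real) \<Rightarrow> 'l measure \<Rightarrow> bool" where
  "is_local_distr f M \<longleftrightarrow>
     (\<forall>x\<in>bits. \<forall>y\<in>bits. \<forall>l\<in>space M.
        (\<forall>a\<in>bits. 0 \<le> f x y l a) \<and> (\<Sum>a\<in>bits. f x y l a) = 1) \<and>
     (\<forall>x\<in>bits. \<forall>y\<in>bits. \<forall>a\<in>bits. (\<lambda>l. f x y l a) \<in> borel_measurable M)"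

definition P2 :: "'l itself \<Rightarrow> real \<Rightarrow> real \<Rightarrow> (nat \<Rightarrow> nat \<Rightarrow> nat \<Rightarrow> nat \<Rightarrow> real) set" where
  "P2 _ epsA epsB = {p. \<exists>(M::'l measure) pA pB.
     prob_space M \<and> is_local_distr pA M \<and> is_local_distr pB M \<and>
     (\<forall>a\<in>bits. \<forall>b\<in>bits. \<forall>x\<in>bits. \<forall>y\<in>bits.
        p a b x y = (\<integral>l. pA x y l a * pB x y l b \<partial>M)) \<and>
     (\<forall>x\<in>bits. \<forall>y\<in>bits. \<forall>y'\<in>bits. \<forall>l\<in>space M.
        (1/2) * (\<Sum>a\<in>bits. \<bar>pA x y l a - pA x y' l a\<bar>) \<le> epsA) \<and>
     (\<forall>y\<in>bits. \<forall>x\<in>bits. \<forall>x'\<in>bits. \<forall>l\<in>space M.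
        (1/2) * (\<Sum>b\<in>bits. \<bar>pB x y l b - pB x' y l b\<bar>) \<le> epsB)}"

definition corr :: "(nat \<Rightarrow> nat \<Rightarrow> nat \<Rightarrow> nat \<Rightarrow> real) \<Rightarrow> nat \<Rightarrow> nat \<Rightarrow> real" where
  "corr p x y = (\<Sum>a\<in>bits. \<Sum>b\<in>bits. (-1) ^ (a + b) * p a b x y)"

definition chsh :: "(nat \<Rightarrow> nat \<Rightarrow> nat \<Rightarrow> nat \<Rightarrow> real) \<Rightarrow> real" where
  "chsh p = corr p 0 0 + corr p 0 1 + corr p 1 0 - corr p 1 1"

end

theory Submission
  imports Defs
begin

text \<open>Conditioned on the hidden variable, the outcomes are independent, so every correlator
  factorises as a product of biases: \<open>\<langle>A\<^sub>xB\<^sub>y\<rangle> = E[\<alpha>\<^sub>x \<beta>\<^sub>x\<^sub>y]\<close> with \<open>\<bar>\<alpha>\<^sub>x\<bar>, \<bar>\<beta>\<^sub>x\<^sub>y\<bar> \<le> 1\<close>.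
  Alice's bias does not depend on \<open>y\<close>, and Bob's bias moves by at most \<open>2\<kappa>\<close> when \<open>x\<close> changes.
  Hence pointwise \<open>\<alpha>\<^sub>0(\<beta>\<^sub>0\<^sub>0 + \<beta>\<^sub>0\<^sub>1) + \<alpha>\<^sub>1(\<beta>\<^sub>1\<^sub>0 - \<beta>\<^sub>1\<^sub>1) \<le> \<bar>\<beta>\<^sub>0\<^sub>0 + \<beta>\<^sub>0\<^sub>1\<bar> + \<bar>\<beta>\<^sub>1\<^sub>0 - \<beta>\<^sub>1\<^sub>1\<bar> \<le> 2 + 2\<kappa>\<close>,
  and averaging over the hidden variable gives the bound. It is attained without any hidden
  variable: both parties always output 0, except that Bob flips his output with probability
  \<open>\<kappa>\<close> on inputs \<open>x = y = 1\<close>.\<close>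

definition bias :: "(nat \<Rightarrow> real) \<Rightarrow> real" where
  "bias f = f 0 - f 1"

lemma corr_product:
  "corr (\<lambda>a b x y. f x y a * g x y b) x y = bias (f x y) * bias (g x y)"
  by (simp add: corr_def bits_def bias_def algebra_simps)

lemma abs_bias_le_1:
  assumes "\<forall>a\<in>bits. 0 \<le> f a" and "(\<Sum>a\<in>bits. f a) = 1"
  shows "\<bar>bias f\<bar> \<le> 1"
  using assms by (auto simp: bias_def bits_def)

lemma abs_bias_diff_le:
  "\<bar>bias f - bias g\<bar> \<le> (\<Sum>a\<in>bits. \<bar>f a - g a\<bar>)"
  by (simp add: bias_def bits_def)

lemma chsh_biases_le:
  fixes \<alpha>\<^sub>0 \<alpha>\<^sub>1 \<beta>\<^sub>0\<^sub>0 \<beta>\<^sub>0\<^sub>1 \<beta>\<^sub>1\<^sub>0 \<beta>\<^sub>1\<^sub>1 \<kappa> :: real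
  assumes "\<bar>\<alpha>\<^sub>0\<bar> \<le> 1" "\<bar>\<alpha>\<^sub>1\<bar> \<le> 1" "\<bar>\<beta>\<^sub>0\<^sub>0\<bar> \<le> 1" "\<bar>\<beta>\<^sub>0\<^sub>1\<bar> \<le> 1" "\<bar>\<beta>\<^sub>1\<^sub>0\<bar> \<le> 1" "\<bar>\<beta>\<^sub>1\<^sub>1\<bar> \<le> 1"
    and "\<bar>\<beta>\<^sub>0\<^sub>0 - \<beta>\<^sub>1\<^sub>0\<bar> \<le> 2 * \<kappa>" "\<bar>\<beta>\<^sub>0\<^sub>1 - \<beta>\<^sub>1\<^sub>1\<bar> \<le> 2 * \<kappa>"
  shows "\<alpha>\<^sub>0 * \<beta>\<^sub>0\<^sub>0 + \<alpha>\<^sub>0 * \<beta>\<^sub>0\<^sub>1 + \<alpha>\<^sub>1 * \<beta>\<^sub>1\<^sub>0 - \<alpha>\<^sub>1 * \<beta>\<^sub>1\<^sub>1 \<le> 2 + 2 * \<kappa>"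
proof -
  have weight: "\<alpha> * s \<le> \<bar>s\<bar>" if "\<bar>\<alpha>\<bar> \<le> 1" for \<alpha> s :: real
  proof -
    have "\<alpha> * s \<le> \<bar>\<alpha>\<bar> * \<bar>s\<bar>" by (metis abs_ge_self abs_mult)
    also have "\<dots> \<le> \<bar>s\<bar>" using that by (simp add: mult_left_le_one_le)
    finally show ?thesis .
  qed
  have "\<alpha>\<^sub>0 * \<beta>\<^sub>0\<^sub>0 + \<alpha>\<^sub>0 * \<beta>\<^sub>0\<^sub>1 + \<alpha>\<^sub>1 * \<beta>\<^sub>1\<^sub>0 - \<alpha>\<^sub>1 * \<beta>\<^sub>1\<^sub>1
      = \<alpha>\<^sub>0 * (\<beta>\<^sub>0\<^sub>0 + \<beta>\<^sub>0\<^sub>1) + \<alpha>\<^sub>1 * (\<beta>\<^sub>1\<^sub>0 - \<beta>\<^sub>1\<^sub>1)"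
    by (simp add: algebra_simps)
  also have "\<dots> \<le> \<bar>\<beta>\<^sub>0\<^sub>0 + \<beta>\<^sub>0\<^sub>1\<bar> + \<bar>\<beta>\<^sub>1\<^sub>0 - \<beta>\<^sub>1\<^sub>1\<bar>"
    using assms(1,2) by (intro add_mono weight)
  also have "\<dots> \<le> 2 + 2 * \<kappa>"
    using assms(3-) by (auto simp: abs_if split: if_splits)
  finally show ?thesis .
qed

lemma local_distr_bounded:
  assumes "is_local_distr f M" "x \<in> bits" "y \<in> bits" "l \<in> space M" "a \<in> bits"
  shows "0 \<le> f x y l a" and "f x y l a \<le> 1"
proof -
  have nonneg: "\<forall>a\<in>bits. 0 \<le> f x y l a" and sum: "(\<Sum>a\<in>bits. f x y l a) = 1"
    using assms(1-4) unfolding is_local_distr_def by auto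
  show "0 \<le> f x y l a" using nonneg assms(5) by blast
  show "f x y l a \<le> 1"
    using member_le_sum[of a bits "f x y l"] nonneg sum assms(5) by (simp add: bits_def)
qed

lemma integrable_local_distr_product:
  assumes "finite_measure M" "is_local_distr pA M" "is_local_distr pB M"
    and "x \<in> bits" "y \<in> bits" "a \<in> bits" "b \<in> bits"
  shows "integrable M (\<lambda>l. pA x y l a * pB x y l b)"
proof (rule finite_measure.integrable_const_bound[OF assms(1), where B=1])
  show "AE l in M. norm (pA x y l a * pB x y l b) \<le> 1"
    using local_distr_bounded[OF assms(2,4,5) _ assms(6)] local_distr_bounded[OF assms(3,4,5) _ assms(7)]
    by (intro AE_I2) (simp add: abs_mult mult_le_one)
  show "(\<lambda>l. pA x y l a * pB x y l b) \<in> borel_measurable M"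
    using assms(2-) unfolding is_local_distr_def by (intro borel_measurable_times) auto
qed

lemma corr_hidden_variable:
  assumes "finite_measure M" "is_local_distr pA M" "is_local_distr pB M" "x \<in> bits" "y \<in> bits"
    and "\<forall>a\<in>bits. \<forall>b\<in>bits. p a b x y = (\<integral>l. pA x y l a * pB x y l b \<partial>M)"
  shows "integrable M (\<lambda>l. bias (pA x y l) * bias (pB x y l))"
    and "corr p x y = (\<integral>l. bias (pA x y l) * bias (pB x y l) \<partial>M)"
proof -
  define summand where "summand a b l = (-1) ^ (a + b) * (pA x y l a * pB x y l b)" for a b l
  have integrable_summand: "integrable M (summand a b)" if "a \<in> bits" "b \<in> bits" for a b
    unfolding summand_def using integrable_local_distr_product[OF assms(1-5) that] by simp
  have biases: "bias (pA x y l) * bias (pB x y l) = (\<Sum>a\<in>bits. \<Sum>b\<in>bits. summand a b l)" for l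
    using corr_product[where f="\<lambda>x y. pA x y l" and g="\<lambda>x y. pB x y l"] by (simp add: corr_def summand_def)
  show "integrable M (\<lambda>l. bias (pA x y l) * bias (pB x y l))"
    unfolding biases using integrable_summand by (simp add: integrable_sum)
  have "corr p x y = (\<Sum>a\<in>bits. \<Sum>b\<in>bits. \<integral>l. summand a b l \<partial>M)"
    unfolding corr_def summand_def using assms(6) by (intro sum.cong) auto
  also have "\<dots> = (\<integral>l. (\<Sum>a\<in>bits. \<Sum>b\<in>bits. summand a b l) \<partial>M)"
    using integrable_summand by (simp add: integral_sum integrable_sum)
  finally show "corr p x y = (\<integral>l. bias (pA x y l) * bias (pB x y l) \<partial>M)"
    by (simp only: biases)
qed

lemma chsh_le_P2:
  assumes "p \<in> P2 TYPE('l) 0 \<kappa>"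
  shows "chsh p \<le> 2 + 2 * \<kappa>"
proof -
  from assms obtain M :: "'l measure" and pA pB where
    M: "prob_space M" and lA: "is_local_distr pA M" and lB: "is_local_distr pB M" and
    p: "\<forall>a\<in>bits. \<forall>b\<in>bits. \<forall>x\<in>bits. \<forall>y\<in>bits.
        p a b x y = (\<integral>l. pA x y l a * pB x y l b \<partial>M)" and
    nsA: "\<forall>x\<in>bits. \<forall>y\<in>bits. \<forall>y'\<in>bits. \<forall>l\<in>space M.
        (1/2) * (\<Sum>a\<in>bits. \<bar>pA x y l a - pA x y' l a\<bar>) \<le> 0" and
    nsB: "\<forall>y\<in>bits. \<forall>x\<in>bits. \<forall>x'\<in>bits. \<forall>l\<in>space M.
        (1/2) * (\<Sum>b\<in>bits. \<bar>pB x y l b - pB x' y l b\<bar>) \<le> \<kappa>"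
    unfolding P2_def by blast
  interpret prob_space M by (rule M)
  define \<alpha> where "\<alpha> x y l = bias (pA x y l)" for x y l
  define \<beta> where "\<beta> x y l = bias (pB x y l)" for x y l
  have bits: "0 \<in> bits" "1 \<in> bits" by (simp_all add: bits_def)
  have corr: "corr p x y = (\<integral>l. \<alpha> x y l * \<beta> x y l \<partial>M)"
    and integrable: "integrable M (\<lambda>l. \<alpha> x y l * \<beta> x y l)" if "x \<in> bits" "y \<in> bits" for x y
    using corr_hidden_variable[OF finite_measure_axioms lA lB that, where p=p] p that
    unfolding \<alpha>_def \<beta>_def by auto
  have \<alpha>_bounded: "\<bar>\<alpha> x y l\<bar> \<le> 1" and \<beta>_bounded: "\<bar>\<beta> x y l\<bar> \<le> 1"
    if "x \<in> bits" "y \<in> bits" "l \<in> space M" for x y l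
    using lA lB that unfolding \<alpha>_def \<beta>_def is_local_distr_def by (auto intro: abs_bias_le_1)
  have \<alpha>_indep_y: "\<alpha> x 1 l = \<alpha> x 0 l" if "x \<in> bits" "l \<in> space M" for x l
    using abs_bias_diff_le[of "pA x 1 l" "pA x 0 l"] nsA that bits unfolding \<alpha>_def by fastforce
  have \<beta>_close: "\<bar>\<beta> 0 y l - \<beta> 1 y l\<bar> \<le> 2 * \<kappa>" if "y \<in> bits" "l \<in> space M" for y l
    using abs_bias_diff_le[of "pB 0 y l" "pB 1 y l"] nsB that bits unfolding \<beta>_def by fastforce
  have "chsh p = (\<integral>l. \<alpha> 0 0 l * \<beta> 0 0 l + \<alpha> 0 1 l * \<beta> 0 1 l
      + \<alpha> 1 0 l * \<beta> 1 0 l - \<alpha> 1 1 l * \<beta> 1 1 l \<partial>M)"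
    unfolding chsh_def using corr integrable bits by simp
  also have "\<dots> \<le> 2 + 2 * \<kappa>"
  proof (intro integral_le_const AE_I2)
    fix l assume l: "l \<in> space M"
    show "\<alpha> 0 0 l * \<beta> 0 0 l + \<alpha> 0 1 l * \<beta> 0 1 l + \<alpha> 1 0 l * \<beta> 1 0 l - \<alpha> 1 1 l * \<beta> 1 1 l
        \<le> 2 + 2 * \<kappa>"
      using chsh_biases_le[of "\<alpha> 0 0 l" "\<alpha> 1 0 l" "\<beta> 0 0 l" "\<beta> 0 1 l" "\<beta> 1 0 l" "\<beta> 1 1 l" \<kappa>]
        \<alpha>_bounded \<beta>_bounded \<alpha>_indep_y \<beta>_close l bits by simp
  qed (use integrable bits in simp)
  finally show ?thesis .
qed

lemma product_distr_in_P2: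
  assumes "\<forall>x\<in>bits. \<forall>y\<in>bits. (\<forall>a\<in>bits. 0 \<le> fA x y a) \<and> (\<Sum>a\<in>bits. fA x y a) = 1"
    and "\<forall>x\<in>bits. \<forall>y\<in>bits. (\<forall>b\<in>bits. 0 \<le> fB x y b) \<and> (\<Sum>b\<in>bits. fB x y b) = 1"
    and "\<forall>x\<in>bits. \<forall>y\<in>bits. \<forall>y'\<in>bits. (1/2) * (\<Sum>a\<in>bits. \<bar>fA x y a - fA x y' a\<bar>) \<le> \<epsilon>\<^sub>A"
    and "\<forall>y\<in>bits. \<forall>x\<in>bits. \<forall>x'\<in>bits. (1/2) * (\<Sum>b\<in>bits. \<bar>fB x y b - fB x' y b\<bar>) \<le> \<epsilon>\<^sub>B"
  shows "(\<lambda>a b x y. fA x y a * fB x y b) \<in> P2 TYPE('l) \<epsilon>\<^sub>A \<epsilon>\<^sub>B"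
proof -
  define M :: "'l measure" where "M = return (count_space UNIV) undefined"
  have "prob_space M" unfolding M_def by (rule prob_space_return) simp
  moreover have "space M = UNIV" by (simp add: M_def)
  moreover have "(\<integral>l. c \<partial>M) = c" for c :: real
    unfolding M_def by (rule integral_return) simp_all
  ultimately show ?thesis
    using assms unfolding P2_def is_local_distr_def
    by (intro CollectI exI[of _ M] exI[of _ "\<lambda>x y l. fA x y"] exI[of _ "\<lambda>x y l. fB x y"]) simp
qed

theorem mainTheorem9:
  fixes \<kappa> :: real
  assumes "0 \<le> \<kappa>" and "\<kappa> < 1"
  shows "(\<forall>p\<in>P2 TYPE('l) 0 \<kappa>. chsh p \<le> 2 + 2 * \<kappa>) \<and>
         (\<exists>p\<in>P2 TYPE('l) 0 \<kappa>. chsh p = 2 + 2 * \<kappa>)"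
proof
  show "\<forall>p\<in>P2 TYPE('l) 0 \<kappa>. chsh p \<le> 2 + 2 * \<kappa>"
    using chsh_le_P2 by blast
  define fA :: "nat \<Rightarrow> nat \<Rightarrow> nat \<Rightarrow> real" where
    "fA x y a = (if a = 0 then 1 else 0)" for x y a
  define fB :: "nat \<Rightarrow> nat \<Rightarrow> nat \<Rightarrow> real" where
    "fB x y b = (if x = 1 \<and> y = 1 then (if b = 0 then 1 - \<kappa> else \<kappa>) else fA x y b)" for x y b
  have "(\<lambda>a b x y. fA x y a * fB x y b) \<in> P2 TYPE('l) 0 \<kappa>"
    by (rule product_distr_in_P2) (use assms in \<open>auto simp: fA_def fB_def bits_def\<close>)
  moreover have "chsh (\<lambda>a b x y. fA x y a * fB x y b) = 2 + 2 * \<kappa>"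
    by (simp add: chsh_def corr_product bias_def fA_def fB_def)
  ultimately show "\<exists>p\<in>P2 TYPE('l) 0 \<kappa>. chsh p = 2 + 2 * \<kappa>" by blast
qed

end
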